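(* Let $m,n\in\mathbb{Z}_{>0}$ with $m\ge n$, let $\psi:\mathcal{G}^{(m,n)}\to\mathbb{C}$ be a Whittaker function with $\psi(I_{m+n-1})\psi(J_{m+n-1})\ne0$, and let $W'=\mathrm{Ind}_{\mathcal{G}^{(m,n)}}^{\mathcal{G}^{(m,0)}}\mathbb{C}w_\psi$. Let $w\in W'\setminus\mathbb{C}w_\psi$ and let $\deg(w)=(\mathbf{j},\mathbf{i})$. Then: (1) If $\mathbf{j}\neq\mathbf{0}$ and $r=\min\{k: j_k\neq0\}$, then $\deg\big((H_{m+n-1-r}-\psi(H_{m+n-1-r}))w\big)=(\mathbf{j}-\epsilon_r,\mathbf{i})$. (2) If $\mathbf{j}=\mathbf{0}$, $\mathbf{i}\ne\mathbf{0}$ and $s=\max\{k: i_k\ne0\}$, then $\deg\big((H_{m+n-1-s}-\psi(H_{m+n-1-s}))w\big)=(\mathbf{0},\mathbf{i}-\epsilon_s)$ or $\deg\big((L_{m+n-1-s}-\psi(L_{m+n-1-s}))w\big)=(\mathbf{0},\mathbf{i}-\epsilon_s)$.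
   Context: $\mathcal{G}$ is the complex Lie algebra with basis $\{L_n,H_n,I_n,J_n,\mathbf{c}_1,\mathbf{c}_2,\mathbf{c}_3: n\in\mathbb{Z}\}$ whose brackets of basis elements are $[L_m,L_n]=(n-m)L_{m+n}+\frac{m^3-m}{12}\delta_{m+n,0}\mathbf{c}_1$, $[L_m,H_n]=nH_{m+n}+m^2\delta_{m+n,0}\mathbf{c}_2$, $[H_m,H_n]=m\delta_{m+n,0}\mathbf{c}_3$, $[L_m,I_n]=(n-m)I_{m+n}$, $[L_m,J_n]=(n-m)J_{m+n}$, $[H_m,I_n]=I_{m+n}$, $[H_m,J_n]=-J_{m+n}$ (and antisymmetric counterparts), all other brackets of basis elements zero. For $m,n\ge0$, $\mathcal{G}^{(m,n)}=\sum_{i\ge0}(\mathbb{C}L_{m+i}+\mathbb{C}H_{m+i}+\mathbb{C}I_{n+i}+\mathbb{C}J_{n+i})+\sum_{k=1}^3\mathbb{C}\mathbf{c}_k$. A Whittaker function is a Lie homomorphism $\psi:\mathcal{G}^{(m,n)}\to\mathbb{C}$, $\mathbb{C}w_\psi$ the corresponding one-dimensional module, and $W'=\mathcal{U}(\mathcal{G}^{(m,0)})\otimes_{\mathcal{U}(\mathcal{G}^{(m,n)})}\mathbb{C}w_\psi$. Orders and degree: for $l\in\mathbb{Z}_{>0}$, elements of $\mathbb{N}^l$ are written $\mathbf{i}=(i_{l-1},\dots,i_1,i_0)$; $\epsilon_k$ has $1$ in the position of index $k$ and $0$ elsewhere; the weight is $\mathbf{w}(\mathbf{i})=\sum_{k=0}^{l-1}(l-k)i_k$.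 On $\mathbb{N}^l$, $\mathbf{i}\succ\mathbf{j}$ iff there is $k$ with $i_k>j_k$ and $i_s=j_s$ for all $s<k$. On $\mathbb{N}^l\times\mathbb{N}^l$ define the total order $(\mathbf{j},\mathbf{i})\succ(\mathbf{j}',\mathbf{i}')$ iff either $\mathbf{w}(\mathbf{j})+\mathbf{w}(\mathbf{i})>\mathbf{w}(\mathbf{j}')+\mathbf{w}(\mathbf{i}')$, or these weights are equal and $\mathbf{i}\succ\mathbf{i}'$, or the weights are equal, $\mathbf{i}=\mathbf{i}'$ and $\mathbf{j}\succ\mathbf{j}'$. Take $l=n$ and for $\mathbf{j},\mathbf{i}\in\mathbb{N}^n$ set $J^{\mathbf{j}}I^{\mathbf{i}}=J_{n-1}^{j_{n-1}}\cdots J_0^{j_0}I_{n-1}^{i_{n-1}}\cdots I_0^{i_0}$. By PBW every $w\in W'$ is uniquely $\sum_{\mathbf{j},\mathbf{i}}J^{\mathbf{j}}I^{\mathbf{i}}w_{\mathbf{j},\mathbf{i}}$ with $w_{\mathbf{j},\mathbf{i}}\in\mathbb{C}w_\psi$, finitely many nonzero; for $w\ne0$, $\deg(w)$ is the $\succ$-maximal $(\mathbf{j},\mathbf{i})$ with $w_{\mathbf{j},\mathbf{i}}\ne0$. *)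

theory Defs
  imports Complex_Main
begin

text \<open>Basis of the Lie algebra G: L_k, H_k, I_k, J_k (k integer) and the central c_1, c_2, c_3.\<close>
datatype gb = L int | H int | I int | J int | C1 | C2 | C3

fun brk :: "gb \<Rightarrow> gb \<Rightarrow> (complex \<times> gb) list" where
  "brk (L a) (L b) = [(of_int (b - a), L (a + b))]
      @ (if a + b = 0 then [((of_int a ^ 3 - of_int a) / 12, C1)] else [])"
| "brk (L a) (H b) = [(of_int b, H (a + b))] @ (if a + b = 0 then [(of_int a ^ 2, C2)] else [])"
| "brk (H b) (L a) = [(- of_int b, H (a + b))] @ (if a + b = 0 then [(- (of_int a ^ 2), C2)] else [])"
| "brk (H a) (H b) = (if a + b = 0 then [(of_int a, C3)] else [])"
| "brk (L a) (I b) = [(of_int (b - a), I (a + b))]"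
| "brk (I b) (L a) = [(- of_int (b - a), I (a + b))]"
| "brk (L a) (J b) = [(of_int (b - a), J (a + b))]"
| "brk (J b) (L a) = [(- of_int (b - a), J (a + b))]"
| "brk (H a) (I b) = [(1, I (a + b))]"
| "brk (I b) (H a) = [(-1, I (a + b))]"
| "brk (H a) (J b) = [(-1, J (a + b))]"
| "brk (J b) (H a) = [(1, J (a + b))]"
| "brk _ _ = []"

fun in_G :: "nat \<Rightarrow> nat \<Rightarrow> gb \<Rightarrow> bool" where
  "in_G m n (L k) = (k \<ge> int m)"
| "in_G m n (H k) = (k \<ge> int m)"
| "in_G m n (I k) = (k \<ge> int n)"
| "in_G m n (J k) = (k \<ge> int n)"
| "in_G m n _ = True"

text \<open>Whittaker function: a Lie homomorphism G^(m,n) -> C, given by its values on the basis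
  (extended linearly); it must vanish on brackets.\<close>
definition whittaker :: "nat \<Rightarrow> nat \<Rightarrow> (gb \<Rightarrow> complex) \<Rightarrow> bool" where
  "whittaker m n \<psi> \<longleftrightarrow>
     (\<forall>a b. in_G m n a \<longrightarrow> in_G m n b \<longrightarrow> (\<Sum>(c, e)\<leftarrow>brk a b. c * \<psi> e) = 0)"

text \<open>A module over G^(m,0) on the complex vector space ('v, sc): action \<rho> given on basis
  elements, each acting linearly, with the bracket relations.\<close>
definition lie_module :: "nat \<Rightarrow> (complex \<Rightarrow> 'v::ab_group_add \<Rightarrow> 'v) \<Rightarrow> (gb \<Rightarrow> 'v \<Rightarrow> 'v) \<Rightarrow> bool" where
  "lie_module m sc \<rho> \<longleftrightarrow> Vector_Spaces.vector_space sc \<and>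
     (\<forall>a. in_G m 0 a \<longrightarrow> Vector_Spaces.linear sc sc (\<rho> a)) \<and>
     (\<forall>a b v. in_G m 0 a \<longrightarrow> in_G m 0 b \<longrightarrow>
        \<rho> a (\<rho> b v) - \<rho> b (\<rho> a v) = (\<Sum>(c, e)\<leftarrow>brk a b. sc c (\<rho> e v)))"

text \<open>Multi-indices in N^n: functions nat => nat vanishing from n on; i k is i_k.\<close>
definition idx :: "nat \<Rightarrow> (nat \<Rightarrow> nat) set" where
  "idx n = {i. \<forall>k\<ge>n. i k = 0}"

definition eps :: "nat \<Rightarrow> nat \<Rightarrow> nat" where
  "eps r = (\<lambda>k. if k = r then 1 else 0)"

fun powX :: "(int \<Rightarrow> gb) \<Rightarrow> (gb \<Rightarrow> 'v \<Rightarrow> 'v) \<Rightarrow> (nat \<Rightarrow> nat) \<Rightarrow> nat \<Rightarrow> 'v \<Rightarrow> 'v" where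
  "powX X \<rho> i 0 v = v"
| "powX X \<rho> i (Suc k) v = (\<rho> (X (int k)) ^^ i k) (powX X \<rho> i k v)"

definition mono :: "(gb \<Rightarrow> 'v \<Rightarrow> 'v) \<Rightarrow> nat \<Rightarrow> (nat \<Rightarrow> nat) \<Rightarrow> (nat \<Rightarrow> nat) \<Rightarrow> 'v \<Rightarrow> 'v" where
  "mono \<rho> n j i v = powX J \<rho> j n (powX I \<rho> i n v)"

definition repr :: "nat \<Rightarrow> (complex \<Rightarrow> 'v::ab_group_add \<Rightarrow> 'v) \<Rightarrow> (gb \<Rightarrow> 'v \<Rightarrow> 'v) \<Rightarrow> 'v \<Rightarrow> 'v
    \<Rightarrow> ((nat \<Rightarrow> nat) \<times> (nat \<Rightarrow> nat) \<Rightarrow> complex) \<Rightarrow> bool" where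
  "repr n sc \<rho> w v c \<longleftrightarrow> finite {p. c p \<noteq> 0} \<and> {p. c p \<noteq> 0} \<subseteq> idx n \<times> idx n \<and>
     v = (\<Sum>p\<in>{p. c p \<noteq> 0}. sc (c p) (mono \<rho> n (fst p) (snd p) w))"

definition coeffs :: "nat \<Rightarrow> (complex \<Rightarrow> 'v::ab_group_add \<Rightarrow> 'v) \<Rightarrow> (gb \<Rightarrow> 'v \<Rightarrow> 'v) \<Rightarrow> 'v \<Rightarrow> 'v
    \<Rightarrow> (nat \<Rightarrow> nat) \<times> (nat \<Rightarrow> nat) \<Rightarrow> complex" where
  "coeffs n sc \<rho> w v = (THE c. repr n sc \<rho> w v c)"

definition weight :: "nat \<Rightarrow> (nat \<Rightarrow> nat) \<Rightarrow> nat" where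
  "weight n i = (\<Sum>k<n. (n - k) * i k)"

definition lex_gt :: "nat \<Rightarrow> (nat \<Rightarrow> nat) \<Rightarrow> (nat \<Rightarrow> nat) \<Rightarrow> bool" where
  "lex_gt n i j \<longleftrightarrow> (\<exists>k<n. i k > j k \<and> (\<forall>s<k. i s = j s))"

definition pair_gt :: "nat \<Rightarrow> (nat \<Rightarrow> nat) \<times> (nat \<Rightarrow> nat) \<Rightarrow> (nat \<Rightarrow> nat) \<times> (nat \<Rightarrow> nat) \<Rightarrow> bool" where
  "pair_gt n p q \<longleftrightarrow>
     weight n (fst p) + weight n (snd p) > weight n (fst q) + weight n (snd q)
   \<or> (weight n (fst p) + weight n (snd p) = weight n (fst q) + weight n (snd q) \<and> lex_gt n (snd p) (snd q))
   \<or> (weight n (fst p) + weight n (snd p) = weight n (fst q) + weight n (snd q) \<and> snd p = snd q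
        \<and> lex_gt n (fst p) (fst q))"

definition has_deg :: "nat \<Rightarrow> (complex \<Rightarrow> 'v::ab_group_add \<Rightarrow> 'v) \<Rightarrow> (gb \<Rightarrow> 'v \<Rightarrow> 'v) \<Rightarrow> 'v \<Rightarrow> 'v
    \<Rightarrow> (nat \<Rightarrow> nat) \<times> (nat \<Rightarrow> nat) \<Rightarrow> bool" where
  "has_deg n sc \<rho> w v p \<longleftrightarrow> coeffs n sc \<rho> w v p \<noteq> 0 \<and>
     (\<forall>q. coeffs n sc \<rho> w v q \<noteq> 0 \<longrightarrow> q \<noteq> p \<longrightarrow> pair_gt n p q)"

end

theory Submission
  imports Defs "HOL-Library.Function_Algebras"
begin

text \<open>
  Let \<open>x = H a\<close> or \<open>x = L a\<close> with \<open>a \<ge> m\<close>. The bracket of \<open>x\<close> with \<open>I k\<close> (resp. \<open>J k\<close>) is a multiple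
  of \<open>I (a + k)\<close> (resp. \<open>J (a + k)\<close>), which acts through \<open>\<psi>\<close> on every vector obtained from \<open>w\<close> by
  applying \<open>I\<close>'s and \<open>J\<close>'s. As also \<open>(x - \<psi> x) w = 0\<close>, the operator \<open>x - \<psi> x\<close> acts on a monomial
  \<open>J^a I^b w\<close> as a derivation: it gives the sum of the monomials obtained by deleting one factor
  \<open>X k\<close>, weighted by its exponent and by \<open>\<psi> [x, X k]\<close>. Since \<open>\<psi>\<close> vanishes on \<open>I l\<close>, \<open>J l\<close> for
  \<open>l \<ge> m + n\<close>, only factors with \<open>k \<le> m + n - 1 - a\<close> contribute, and deleting a factor of index \<open>k\<close>
  lowers the weight by \<open>n - k\<close>.

  For \<open>a = m + n - 1 - r\<close> the leading term of \<open>(x - \<psi> x) v\<close> therefore comes from deleting \<open>J r\<close>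
  from the leading monomial of \<open>v\<close>, with coefficient a nonzero multiple of \<open>\<psi> (J (m + n - 1))\<close>.
  In part (2) two terms compete for the top: deleting \<open>I s\<close> from \<open>(0, i)\<close> and deleting \<open>J s\<close> from
  \<open>(eps s, i - eps s)\<close>. Their total coefficient is \<open>Y - Z\<close> for \<open>H a\<close> and \<open>(s - a) (Y + Z)\<close> for
  \<open>L a\<close>, where \<open>Y \<noteq> 0\<close> and \<open>s \<noteq> a\<close> because \<open>n \<le> m\<close>; so at least one of them survives.
\<close>

lemma weight_add: "weight n (x + y) = weight n x + weight n y"
  by (simp add: weight_def sum.distrib add_mult_distrib2)

lemma weight_eps: "k < n \<Longrightarrow> weight n (eps k) = n - k"
  by (simp add: weight_def eps_def if_distrib cong: if_cong)

lemma minus_eps_plus_eps: "0 < x k \<Longrightarrow> x - eps k + eps k = x"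
  by (auto simp: eps_def fun_eq_iff)

lemma weight_minus_eps:
  assumes "k < n" "0 < x k"
  shows "weight n x = weight n (x - eps k) + (n - k)"
  by (metis assms minus_eps_plus_eps weight_add weight_eps)

lemma weight_eq_0_iff: "x \<in> idx n \<Longrightarrow> weight n x = 0 \<longleftrightarrow> x = (\<lambda>_. 0)"
  by (force simp: weight_def idx_def not_le)

lemma idx_nonzero_less: "x \<in> idx n \<Longrightarrow> x k \<noteq> 0 \<Longrightarrow> k < n"
  by (metis (mono_tags) idx_def mem_Collect_eq not_less)

lemma Least_nonzero_idx:
  assumes "j \<in> idx n" "j \<noteq> (\<lambda>_. 0)"
  shows "(LEAST k. j k \<noteq> 0) < n" "0 < j (LEAST k. j k \<noteq> 0)"
proof -
  have "\<exists>k. j k \<noteq> 0"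
    using assms(2) by auto
  then have "j (LEAST k. j k \<noteq> 0) \<noteq> 0"
    by (rule LeastI_ex)
  then show "(LEAST k. j k \<noteq> 0) < n" "0 < j (LEAST k. j k \<noteq> 0)"
    using idx_nonzero_less[OF assms(1)] by auto
qed

lemma Greatest_nonzero_idx:
  assumes "i \<in> idx n" "i \<noteq> (\<lambda>_. 0)"
  defines "s \<equiv> GREATEST k. i k \<noteq> 0"
  shows "s < n" "0 < i s" "\<forall>k>s. i k = 0"
proof -
  have bound: "i k \<noteq> 0 \<Longrightarrow> k \<le> n" for k
    using idx_nonzero_less[OF assms(1)] by (simp add: less_imp_le)
  obtain k where "i k \<noteq> 0"
    using assms(2) by auto
  then have "i s \<noteq> 0"
    unfolding s_def by (rule GreatestI_nat[OF _ bound])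
  then show "s < n" "0 < i s"
    using idx_nonzero_less[OF assms(1)] by auto
  have "k \<le> s" if "i k \<noteq> 0" for k
    unfolding s_def using that by (rule Greatest_le_nat[OF _ bound])
  then show "\<forall>k>s. i k = 0"
    by (meson not_le)
qed

lemma weight_less_if_le:
  assumes "x \<le> y" "x \<noteq> y" "y \<in> idx n"
  shows "weight n x < weight n y"
proof -
  obtain t where t: "x t < y t"
    using assms(1,2) by (metis le_funD order.not_eq_order_implies_strict ext)
  then have "t < n"
    using assms(3) by (cases "t < n") (auto simp: idx_def)
  then show ?thesis
    unfolding weight_def
    using assms(1) t by (intro sum_strict_mono_ex1) (auto simp: le_fun_def)
qed

lemma lex_gt_irrefl: "\<not> lex_gt n x x"
  by (auto simp: lex_gt_def)

lemma not_lex_gt_zero: "\<not> lex_gt n (\<lambda>_. 0) x"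
  by (auto simp: lex_gt_def)

lemma lex_gt_trans:
  assumes "lex_gt n x y" "lex_gt n y z"
  shows "lex_gt n x z"
proof -
  obtain a where a: "a < n" "y a < x a" "\<forall>s<a. x s = y s"
    using assms(1) by (auto simp: lex_gt_def)
  obtain b where b: "b < n" "z b < y b" "\<forall>s<b. y s = z s"
    using assms(2) by (auto simp: lex_gt_def)
  show ?thesis
    unfolding lex_gt_def
    using a b by (intro exI[of _ "min a b"]) (auto simp: min_def, metis le_neq_implies_less less_trans)
qed

lemma lex_gt_minus_eps: "k < n \<Longrightarrow> 0 < x k \<Longrightarrow> lex_gt n x (x - eps k)"
  unfolding lex_gt_def by (intro exI[of _ k]) (auto simp: eps_def)

lemma lex_gt_minus_eps_mono:
  assumes "lex_gt n x y" "0 < y k"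
  shows "lex_gt n (x - eps k) (y - eps k)"
proof -
  obtain k0 where "k0 < n" "y k0 < x k0" "\<forall>t<k0. x t = y t"
    using assms(1) by (auto simp: lex_gt_def)
  then show ?thesis
    unfolding lex_gt_def using assms(2) by (intro exI[of _ k0]) (auto simp: eps_def)
qed

text \<open>Such a \<open>y\<close> dominates \<open>i - eps s\<close> componentwise.\<close>
lemma weight_less_if_lex_between:
  assumes y: "y \<in> idx n" and s: "s < n" "0 < i s" "\<forall>k>s. i k = 0"
    and gt: "lex_gt n i y" and not_gt: "\<not> lex_gt n (i - eps s) y" and ne: "y \<noteq> i - eps s"
  shows "weight n (i - eps s) < weight n y"
proof -
  obtain k where k: "k < n" "y k < i k" "\<forall>t<k. i t = y t"
    using gt by (auto simp: lex_gt_def)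
  have "k = s"
  proof (rule ccontr)
    assume "k \<noteq> s"
    then consider "k < s" | "s < k" by linarith
    then show False
    proof cases
      case 1
      then have "lex_gt n (i - eps s) y"
        unfolding lex_gt_def using k by (intro exI[of _ k]) (auto simp: eps_def)
      with not_gt show False ..
    qed (use k s in auto)
  qed
  have "y s = i s - 1"
  proof (rule ccontr)
    assume "y s \<noteq> i s - 1"
    then have "lex_gt n (i - eps s) y"
      unfolding lex_gt_def using k \<open>k = s\<close> by (intro exI[of _ s]) (auto simp: eps_def)
    with not_gt show False ..
  qed
  have "(i - eps s) t \<le> y t" for t
    using k \<open>k = s\<close> \<open>y s = i s - 1\<close> s(3)
    by (cases t s rule: linorder_cases) (auto simp: eps_def)
  with ne y show ?thesis
    by (intro weight_less_if_le) (auto simp: le_fun_def)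
qed

text \<open>A term \<open>((a, b), k, is_I)\<close> of the expansion of \<open>(x - \<psi> x) J^a I^b w\<close> removes one factor
  \<open>I\<^sub>k\<close> (if \<open>is_I\<close>) or \<open>J\<^sub>k\<close> (otherwise) from the monomial.\<close>
definition lower :: "((nat \<Rightarrow> nat) \<times> (nat \<Rightarrow> nat)) \<times> nat \<times> bool \<Rightarrow> (nat \<Rightarrow> nat) \<times> (nat \<Rightarrow> nat)"
  where "lower t = (case t of ((a, b), k, is_I) \<Rightarrow> if is_I then (a, b - eps k) else (a - eps k, b))"

lemma lower_idx: "fst t \<in> idx n \<times> idx n \<Longrightarrow> lower t \<in> idx n \<times> idx n"
  by (auto simp: lower_def idx_def split: prod.splits)

abbreviation total_weight :: "nat \<Rightarrow> (nat \<Rightarrow> nat) \<times> (nat \<Rightarrow> nat) \<Rightarrow> nat"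
  where "total_weight n p \<equiv> weight n (fst p) + weight n (snd p)"

lemma total_weight_lower:
  assumes "k < n" "0 < (if is_I then b k else a k)"
  shows "total_weight n (lower ((a, b), k, is_I)) + (n - k) = total_weight n (a, b)"
  using assms weight_minus_eps[OF assms(1), of a] weight_minus_eps[OF assms(1), of b]
  by (cases is_I) (auto simp: lower_def)

lemma total_weight_lower_cases:
  assumes le: "(a, b) = p \<or> pair_gt n p (a, b)" and k: "k \<le> r" "r < n"
    and pos: "0 < (if is_I then b k else a k)"
    and q: "total_weight n q + (n - r) = total_weight n p"
  obtains (lighter) "pair_gt n q (lower ((a, b), k, is_I))"
    | (same_weight) "k = r" "total_weight n (a, b) = total_weight n p"
      "total_weight n (lower ((a, b), k, is_I)) = total_weight n q"
proof -
  have "total_weight n (lower ((a, b), k, is_I)) + (n - k) = total_weight n (a, b)"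
    using total_weight_lower[of k n is_I b a] pos k by simp
  moreover have "total_weight n (a, b) \<le> total_weight n p"
    using le by (auto simp: pair_gt_def)
  ultimately have "total_weight n (lower ((a, b), k, is_I)) < total_weight n q
    \<or> k = r \<and> total_weight n (a, b) = total_weight n p
      \<and> total_weight n (lower ((a, b), k, is_I)) = total_weight n q"
    using k q by arith
  then show thesis
    using that by (auto simp: pair_gt_def)
qed

lemma pair_gt_lower_J:
  assumes r: "r < n" "0 < j r"
    and le: "(a, b) = (j, i) \<or> pair_gt n (j, i) (a, b)"
    and k: "k \<le> r" and pos: "0 < (if is_I then b k else a k)"
  shows "((a, b), k, is_I) = ((j, i), r, False) \<or> pair_gt n (j - eps r, i) (lower ((a, b), k, is_I))"
proof -
  have q: "total_weight n (j - eps r, i) + (n - r) = total_weight n (j, i)"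
    using weight_minus_eps[of r n j] r by simp
  show ?thesis
  proof (cases rule: total_weight_lower_cases[OF le k r(1) pos q, case_names lighter same_weight])
    case same_weight
    show ?thesis
    proof (cases is_I)
      case True
      with pos same_weight(1) have low: "lower ((a, b), r, True) = (a, b - eps r)" "0 < b r"
        by (simp_all add: lower_def)
      have "b = i \<or> lex_gt n i b"
        using le same_weight(2) by (auto simp: pair_gt_def)
      then have "lex_gt n i (b - eps r)"
        using lex_gt_minus_eps[of r n b] r(1) low(2) lex_gt_trans by metis
      then show ?thesis
        using True same_weight by (simp add: low pair_gt_def)
    next
      case False
      with pos same_weight(1) have low: "lower ((a, b), r, False) = (a - eps r, b)" "0 < a r"
        by (simp_all add: lower_def)
      consider (top) "(a, b) = (j, i)" | (I_lower) "lex_gt n i b" | (J_lower) "b = i" "lex_gt n j a"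
        using le same_weight(2) by (auto simp: pair_gt_def)
      then show ?thesis
      proof cases
        case J_lower
        then have "lex_gt n (j - eps r) (a - eps r)"
          using low(2) lex_gt_minus_eps_mono by simp
        then show ?thesis
          using False same_weight(1,3) J_lower(1)[symmetric] by (simp add: low pair_gt_def)
      qed (use False same_weight in \<open>simp_all add: low pair_gt_def\<close>)
    qed
  qed simp
qed

lemma lex_gt_minus_eps_or_eq:
  assumes s: "s < n" "0 < i s" "\<forall>k>s. i k = 0" and idx: "a \<in> idx n" "b \<in> idx n"
    and a: "0 < a s" and gt: "lex_gt n i b" and "total_weight n (a, b) = weight n i"
  shows "(a, b) = (eps s, i - eps s) \<or> lex_gt n (i - eps s) b"
proof -
  have weight: "weight n a + weight n b = weight n i"
    using assms(8) by simp
  have wi: "weight n (i - eps s) + (n - s) = weight n i"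
    using weight_minus_eps[of s n i] s by simp
  have wa: "weight n a = weight n (a - eps s) + (n - s)"
    using weight_minus_eps[of s n a] s(1) a by simp
  consider "lex_gt n (i - eps s) b" | "b = i - eps s" | "\<not> lex_gt n (i - eps s) b" "b \<noteq> i - eps s"
    by blast
  then show ?thesis
  proof cases
    case 2
    then have "a - eps s = (\<lambda>_. 0)"
      using weight wi wa idx(1) weight_eq_0_iff[of "a - eps s" n] by (simp add: idx_def)
    then have "a t = eps s t" for t
      using a by (cases "t = s") (auto simp: fun_eq_iff eps_def dest: spec[of _ t])
    then show ?thesis
      using 2 by auto
  next
    case 3
    then have "weight n (i - eps s) < weight n b"
      using weight_less_if_lex_between[OF idx(2) s gt] by simp
    with weight wi wa show ?thesis
      by linarith
  qed simp
qed

lemma pair_gt_lower_I: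
  assumes s: "s < n" "0 < i s" "\<forall>k>s. i k = 0" and idx: "a \<in> idx n" "b \<in> idx n"
    and le: "(a, b) = ((\<lambda>_. 0), i) \<or> pair_gt n ((\<lambda>_. 0), i) (a, b)"
    and k: "k \<le> s" and pos: "0 < (if is_I then b k else a k)"
  shows "((a, b), k, is_I) \<in> {(((\<lambda>_. 0), i), s, True), ((eps s, i - eps s), s, False)}
    \<or> pair_gt n ((\<lambda>_. 0), i - eps s) (lower ((a, b), k, is_I))"
proof -
  have q: "total_weight n ((\<lambda>_. 0), i - eps s) + (n - s) = total_weight n ((\<lambda>_. 0), i)"
    using weight_minus_eps[of s n i] s by (simp add: weight_def)
  show ?thesis
  proof (cases rule: total_weight_lower_cases[OF le k s(1) pos q, case_names lighter same_weight])
    case same_weight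
    have top_or_lower: "(a, b) = ((\<lambda>_. 0), i) \<or> lex_gt n i b"
      using le same_weight(2) by (auto simp: pair_gt_def weight_def not_lex_gt_zero)
    show ?thesis
    proof (cases is_I)
      case True
      with pos same_weight(1) have low: "lower ((a, b), s, True) = (a, b - eps s)" "0 < b s"
        by (simp_all add: lower_def)
      then have "(a, b) = ((\<lambda>_. 0), i) \<or> lex_gt n (i - eps s) (b - eps s)"
        using top_or_lower lex_gt_minus_eps_mono by blast
      then show ?thesis
        using True same_weight by (auto simp: low pair_gt_def)
    next
      case False
      with pos same_weight(1) have low: "lower ((a, b), s, False) = (a - eps s, b)" "0 < a s"
        by (simp_all add: lower_def)
      then have "lex_gt n i b"
        using top_or_lower by auto
      then have "(a, b) = (eps s, i - eps s) \<or> lex_gt n (i - eps s) b"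
        using lex_gt_minus_eps_or_eq[OF s idx low(2)] same_weight(2) by (simp add: weight_def)
      then show ?thesis
        using False same_weight by (auto simp: low pair_gt_def)
    qed
  qed simp
qed

lemma pair_gt_irrefl: "\<not> pair_gt n q q"
  by (auto simp: pair_gt_def lex_gt_irrefl)

lemma has_deg_if_coeffs_grouped:
  assumes coeffs: "coeffs n sc \<rho> w u = (\<lambda>q. \<Sum>t\<in>{t\<in>T. f t = q}. a t)"
    and T: "finite T" "{t. a t \<noteq> 0} \<subseteq> T"
    and B: "finite B" "\<forall>t\<in>B. f t = q" "sum a B \<noteq> 0"
    and dominated: "\<forall>t. a t \<noteq> 0 \<longrightarrow> t \<in> B \<or> pair_gt n q (f t)"
  shows "has_deg n sc \<rho> w u q"
proof -
  have "(\<Sum>t\<in>{t\<in>T. f t = q}. a t) = (\<Sum>t\<in>{t\<in>T. f t = q} \<inter> B. a t)"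
    using T dominated pair_gt_irrefl by (intro sum.mono_neutral_right) fastforce+
  also have "\<dots> = sum a B"
    using T B by (intro sum.mono_neutral_left) auto
  finally have "coeffs n sc \<rho> w u q \<noteq> 0"
    using coeffs B(3) by simp
  moreover have "pair_gt n q q'" if "coeffs n sc \<rho> w u q' \<noteq> 0" "q' \<noteq> q" for q'
  proof -
    have "(\<Sum>t\<in>{t\<in>T. f t = q'}. a t) \<noteq> 0"
      using that(1) coeffs by simp
    then obtain t where "t \<in> {t\<in>T. f t = q'}" "a t \<noteq> 0"
      by (rule sum.not_neutral_contains_not_neutral)
    then show ?thesis
      using dominated B(2) that(2) by blast
  qed
  ultimately show ?thesis
    by (simp add: has_deg_def)
qed

locale monomial_basis = vector_space sc
  for sc :: "complex \<Rightarrow> 'v::ab_group_add \<Rightarrow> 'v" +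
  fixes n :: nat and \<rho> :: "gb \<Rightarrow> 'v \<Rightarrow> 'v" and w :: 'v
  assumes unique_repr: "\<exists>!c. repr n sc \<rho> w u c"
begin

sublocale vector_space_pair sc sc ..

lemma linear_funpow: "Vector_Spaces.linear sc sc f \<Longrightarrow> Vector_Spaces.linear sc sc (f ^^ p)"
  by (induction p) (simp_all add: id_def linear_ident Vector_Spaces.linear_compose)

lemma repr_coeffs: "repr n sc \<rho> w u (coeffs n sc \<rho> w u)"
  unfolding coeffs_def by (rule theI'[OF unique_repr])

lemma coeffs_nonzero_idx: "coeffs n sc \<rho> w u p \<noteq> 0 \<Longrightarrow> p \<in> idx n \<times> idx n"
  using repr_coeffs by (auto simp: repr_def)

lemma coeffs_eq_grouped_sum:
  assumes T: "finite T" and idx: "f ` T \<subseteq> idx n \<times> idx n"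
    and u: "u = (\<Sum>t\<in>T. sc (a t) (mono \<rho> n (fst (f t)) (snd (f t)) w))"
  shows "coeffs n sc \<rho> w u = (\<lambda>q. \<Sum>t\<in>{t\<in>T. f t = q}. a t)"
proof -
  define c where "c q = (\<Sum>t\<in>{t\<in>T. f t = q}. a t)" for q
  have supp: "{q. c q \<noteq> 0} \<subseteq> f ` T"
  proof
    fix q
    assume "q \<in> {q. c q \<noteq> 0}"
    then have "(\<Sum>t\<in>{t\<in>T. f t = q}. a t) \<noteq> 0"
      by (simp add: c_def)
    then obtain t where "t \<in> {t\<in>T. f t = q}" "a t \<noteq> 0"
      by (rule sum.not_neutral_contains_not_neutral)
    then show "q \<in> f ` T"
      by auto
  qed
  have "(\<Sum>q\<in>{q. c q \<noteq> 0}. sc (c q) (mono \<rho> n (fst q) (snd q) w))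
      = (\<Sum>q\<in>f ` T. sc (c q) (mono \<rho> n (fst q) (snd q) w))"
    using T supp by (intro sum.mono_neutral_left) auto
  also have "\<dots> = (\<Sum>q\<in>f ` T. \<Sum>t\<in>{t\<in>T. f t = q}. sc (a t) (mono \<rho> n (fst (f t)) (snd (f t)) w))"
    unfolding c_def scale_sum_left by (intro sum.cong) auto
  also have "\<dots> = u"
    unfolding u by (rule sum.group) (use T in auto)
  finally have "u = (\<Sum>q\<in>{q. c q \<noteq> 0}. sc (c q) (mono \<rho> n (fst q) (snd q) w))" ..
  moreover have "finite {q. c q \<noteq> 0}"
    using supp T finite_subset by blast
  ultimately have "repr n sc \<rho> w u c"
    unfolding repr_def using supp idx by auto
  then show ?thesis
    unfolding coeffs_def c_def[abs_def, symmetric] by (rule the1_equality[OF unique_repr])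
qed

end

text \<open>\<open>term_coeff c \<beta>I \<beta>J t\<close> is the coefficient of the term \<open>t\<close> in the expansion of
  \<open>(x - \<psi> x) v\<close>, where \<open>v\<close> has coefficients \<open>c\<close> and \<open>[x, I\<^sub>k]\<close>, \<open>[x, J\<^sub>k]\<close> act as the scalars
  \<open>\<beta>I k\<close>, \<open>\<beta>J k\<close>.\<close>
definition term_coeff :: "((nat \<Rightarrow> nat) \<times> (nat \<Rightarrow> nat) \<Rightarrow> complex) \<Rightarrow> (nat \<Rightarrow> complex) \<Rightarrow> (nat \<Rightarrow> complex)
    \<Rightarrow> ((nat \<Rightarrow> nat) \<times> (nat \<Rightarrow> nat)) \<times> nat \<times> bool \<Rightarrow> complex"
  where "term_coeff c \<beta>I \<beta>J t = (case t of ((a, b), k, is_I) \<Rightarrow>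
    c (a, b) * (if is_I then of_nat (b k) * \<beta>I k else of_nat (a k) * \<beta>J k))"

lemma term_coeff_nonzeroD:
  assumes "term_coeff c \<beta>I \<beta>J ((a, b), k, is_I) \<noteq> 0"
  shows "c (a, b) \<noteq> 0" "0 < (if is_I then b k else a k)" "(if is_I then \<beta>I k else \<beta>J k) \<noteq> 0"
  using assms by (auto simp: term_coeff_def split: if_splits)

locale whittaker_module = monomial_basis sc n \<rho> w
  for sc :: "complex \<Rightarrow> 'v::ab_group_add \<Rightarrow> 'v" and n \<rho> w +
  fixes m :: nat and \<psi> :: "gb \<Rightarrow> complex"
  assumes n_le_m: "n \<le> m"
    and whittaker: "whittaker m n \<psi>"
    and module: "lie_module m sc \<rho>"
    and whittaker_vector: "in_G m n x \<Longrightarrow> \<rho> x w = sc (\<psi> x) w"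
begin

lemma linear_rho: "in_G m 0 x \<Longrightarrow> Vector_Spaces.linear sc sc (\<rho> x)"
  using module by (simp add: lie_module_def)

lemma rho_bracket:
  "in_G m 0 x \<Longrightarrow> in_G m 0 y \<Longrightarrow> \<rho> x (\<rho> y u) - \<rho> y (\<rho> x u) = (\<Sum>(c, e)\<leftarrow>brk x y. sc c (\<rho> e u))"
  using module by (simp add: lie_module_def)

lemma linear_rho_IJ: "X \<in> {I, J} \<Longrightarrow> Vector_Spaces.linear sc sc (\<rho> (X (int k)))"
  by (auto intro: linear_rho)

lemma linear_powX: "X \<in> {I, J} \<Longrightarrow> Vector_Spaces.linear sc sc (powX X \<rho> i K)"
proof (induction K)
  case 0
  then show ?case by (simp add: linear_ident)
next
  case (Suc K)
  then have "Vector_Spaces.linear sc sc ((\<rho> (X (int K)) ^^ i K) \<circ> powX X \<rho> i K)"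
    by (simp add: Vector_Spaces.linear_compose linear_funpow linear_rho_IJ)
  then show ?case
    by (simp add: o_def)
qed

lemma rho_IJ_commute:
  assumes "X \<in> {I, J}" "Y \<in> {I, J}" "0 \<le> l"
  shows "\<rho> (X (int k)) (\<rho> (Y l) u) = \<rho> (Y l) (\<rho> (X (int k)) u)"
  using rho_bracket[of "X (int k)" "Y l" u] assms by auto

definition IJ_whittaker :: "'v set"
  where "IJ_whittaker = {u. \<forall>k\<ge>int n. \<rho> (I k) u = sc (\<psi> (I k)) u \<and> \<rho> (J k) u = sc (\<psi> (J k)) u}"

lemma w_IJ_whittaker: "w \<in> IJ_whittaker"
  by (simp add: IJ_whittaker_def whittaker_vector)

lemma rho_IJ_whittaker:
  assumes "u \<in> IJ_whittaker" "X \<in> {I, J}"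
  shows "\<rho> (X (int k)) u \<in> IJ_whittaker"
proof -
  have "\<rho> (Y l) (\<rho> (X (int k)) u) = sc (\<psi> (Y l)) (\<rho> (X (int k)) u)"
    if "int n \<le> l" "Y \<in> {I, J}" for l Y
  proof -
    have "\<rho> (Y l) (\<rho> (X (int k)) u) = \<rho> (X (int k)) (\<rho> (Y l) u)"
      using rho_IJ_commute[OF assms(2) that(2)] that(1) by simp
    also have "\<dots> = \<rho> (X (int k)) (sc (\<psi> (Y l)) u)"
      using assms(1) that by (auto simp: IJ_whittaker_def)
    finally show ?thesis
      using linear_scale[OF linear_rho_IJ[OF assms(2)]] by simp
  qed
  then show ?thesis
    by (simp add: IJ_whittaker_def)
qed

lemma funpow_IJ_whittaker: "u \<in> IJ_whittaker \<Longrightarrow> X \<in> {I, J} \<Longrightarrow> (\<rho> (X (int k)) ^^ p) u \<in> IJ_whittaker"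
  by (induction p) (simp_all add: rho_IJ_whittaker)

lemma powX_IJ_whittaker: "u \<in> IJ_whittaker \<Longrightarrow> X \<in> {I, J} \<Longrightarrow> powX X \<rho> i K u \<in> IJ_whittaker"
  by (induction K) (simp_all add: funpow_IJ_whittaker)

definition rho_minus_psi :: "gb \<Rightarrow> 'v \<Rightarrow> 'v"
  where "rho_minus_psi x u = \<rho> x u - sc (\<psi> x) u"

lemma linear_rho_minus_psi: "in_G m 0 x \<Longrightarrow> Vector_Spaces.linear sc sc (rho_minus_psi x)"
  unfolding rho_minus_psi_def[abs_def]
  by (intro linear_compose_sub linear_rho linear_compose_scale_right linear_ident)

definition bracket_scalar :: "gb \<Rightarrow> (int \<Rightarrow> gb) \<Rightarrow> (nat \<Rightarrow> complex) \<Rightarrow> bool"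
  where "bracket_scalar x X \<beta> \<longleftrightarrow>
    (\<forall>u\<in>IJ_whittaker. \<forall>k. \<rho> x (\<rho> (X (int k)) u) - \<rho> (X (int k)) (\<rho> x u) = sc (\<beta> k) u)"

lemma rho_minus_psi_funpow:
  assumes X: "X \<in> {I, J}" and \<beta>: "bracket_scalar x X \<beta>" and u: "u \<in> IJ_whittaker"
  shows "rho_minus_psi x ((\<rho> (X (int k)) ^^ p) u)
    = (\<rho> (X (int k)) ^^ p) (rho_minus_psi x u) + sc (of_nat p * \<beta> k) ((\<rho> (X (int k)) ^^ (p - 1)) u)"
proof (induction p)
  case 0
  then show ?case by simp
next
  case (Suc p)
  let ?T = "\<rho> (X (int k))"
  let ?y = "(?T ^^ p) u"
  note lin = linear_rho_IJ[OF X]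
  have "\<rho> x (?T ?y) = ?T (\<rho> x ?y) + sc (\<beta> k) ?y"
    using \<beta> funpow_IJ_whittaker[OF u X] by (simp add: bracket_scalar_def diff_eq_eq add.commute)
  then have "rho_minus_psi x ((?T ^^ Suc p) u) = ?T (rho_minus_psi x ?y) + sc (\<beta> k) ?y"
    by (simp add: rho_minus_psi_def linear_diff[OF lin] linear_scale[OF lin])
  also have "\<dots> = ?T ((?T ^^ p) (rho_minus_psi x u) + sc (of_nat p * \<beta> k) ((?T ^^ (p - 1)) u))
      + sc (\<beta> k) ?y"
    by (simp only: Suc.IH)
  also have "\<dots> = (?T ^^ Suc p) (rho_minus_psi x u) + sc (of_nat p * \<beta> k) ?y + sc (\<beta> k) ?y"
    by (cases p) (simp_all add: linear_add[OF lin] linear_scale[OF lin])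
  also have "\<dots> = (?T ^^ Suc p) (rho_minus_psi x u) + sc (of_nat (Suc p) * \<beta> k) ((?T ^^ (Suc p - 1)) u)"
    by (simp add: algebra_simps scale_left_distrib)
  finally show ?case .
qed

lemma rho_minus_psi_powX:
  assumes X: "X \<in> {I, J}" and \<beta>: "bracket_scalar x X \<beta>" and u: "u \<in> IJ_whittaker"
  shows "rho_minus_psi x (powX X \<rho> i K u) = powX X \<rho> i K (rho_minus_psi x u)
    + (\<Sum>k<K. sc (of_nat (i k) * \<beta> k) (powX X \<rho> (i - eps k) K u))"
proof (induction K)
  case 0
  then show ?case by simp
next
  case (Suc K)
  let ?T = "\<rho> (X (int K)) ^^ i K"
  let ?y = "powX X \<rho> i K u"
  note lin = linear_funpow[OF linear_rho_IJ[OF X]]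
  have powX_minus_eps: "powX X \<rho> (i - eps k) K u = powX X \<rho> i K u" if "K \<le> k" for k
    using that by (induction K) (simp_all add: eps_def)
  have "rho_minus_psi x (powX X \<rho> i (Suc K) u)
      = ?T (rho_minus_psi x ?y) + sc (of_nat (i K) * \<beta> K) ((\<rho> (X (int K)) ^^ (i K - 1)) ?y)"
    using rho_minus_psi_funpow[OF X \<beta> powX_IJ_whittaker[OF u X]] by simp
  also have "?T (rho_minus_psi x ?y) = ?T (powX X \<rho> i K (rho_minus_psi x u))
      + (\<Sum>k<K. sc (of_nat (i k) * \<beta> k) (?T (powX X \<rho> (i - eps k) K u)))"
    by (simp only: Suc.IH linear_add[OF lin] linear_sum[OF lin] linear_scale[OF lin])
  also have "\<dots> = powX X \<rho> i (Suc K) (rho_minus_psi x u)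
      + (\<Sum>k<K. sc (of_nat (i k) * \<beta> k) (powX X \<rho> (i - eps k) (Suc K) u))"
    by (intro arg_cong2[where f = "(+)"] sum.cong refl) (simp_all add: eps_def)
  also have "(\<rho> (X (int K)) ^^ (i K - 1)) ?y = powX X \<rho> (i - eps K) (Suc K) u"
    by (simp add: powX_minus_eps, simp add: eps_def)
  finally show ?case
    by (simp only: sum.lessThan_Suc add.assoc)
qed

lemma rho_minus_psi_mono:
  assumes \<beta>I: "bracket_scalar x I \<beta>I" and \<beta>J: "bracket_scalar x J \<beta>J" and w: "rho_minus_psi x w = 0"
  shows "rho_minus_psi x (mono \<rho> n a b w)
    = (\<Sum>k<n. sc (of_nat (b k) * \<beta>I k) (mono \<rho> n a (b - eps k) w))
      + (\<Sum>k<n. sc (of_nat (a k) * \<beta>J k) (mono \<rho> n (a - eps k) b w))"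
proof -
  have I: "I \<in> {I, J}" and J: "J \<in> {I, J}"
    by simp_all
  have "rho_minus_psi x (powX I \<rho> b n w) = (\<Sum>k<n. sc (of_nat (b k) * \<beta>I k) (powX I \<rho> (b - eps k) n w))"
    using rho_minus_psi_powX[OF I \<beta>I w_IJ_whittaker, of b n] w linear_0[OF linear_powX[OF I]] by simp
  then show ?thesis
    unfolding mono_def rho_minus_psi_powX[OF J \<beta>J powX_IJ_whittaker[OF w_IJ_whittaker I]]
    by (simp add: linear_sum[OF linear_powX[OF J]] linear_scale[OF linear_powX[OF J]])
qed

lemma coeffs_rho_minus_psi:
  fixes v :: 'v
  assumes x: "in_G m 0 x" and \<beta>I: "bracket_scalar x I \<beta>I" and \<beta>J: "bracket_scalar x J \<beta>J"
    and w: "rho_minus_psi x w = 0"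
  defines "c \<equiv> coeffs n sc \<rho> w v"
  defines "T \<equiv> {p. c p \<noteq> 0} \<times> {..<n} \<times> (UNIV :: bool set)"
  shows "coeffs n sc \<rho> w (rho_minus_psi x v) = (\<lambda>q. \<Sum>t\<in>{t\<in>T. lower t = q}. term_coeff c \<beta>I \<beta>J t)"
proof (rule coeffs_eq_grouped_sum)
  have P: "finite {p. c p \<noteq> 0}" "{p. c p \<noteq> 0} \<subseteq> idx n \<times> idx n"
    and v: "v = (\<Sum>p | c p \<noteq> 0. sc (c p) (mono \<rho> n (fst p) (snd p) w))"
    using repr_coeffs[of v] by (simp_all add: repr_def c_def)
  show "finite T"
    using P(1) by (simp add: T_def)
  show "lower ` T \<subseteq> idx n \<times> idx n"
  proof (rule image_subsetI)
    fix t
    assume "t \<in> T"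
    then show "lower t \<in> idx n \<times> idx n"
      using P(2) by (intro lower_idx) (auto simp: T_def)
  qed
  let ?m = "\<lambda>t. mono \<rho> n (fst (lower t)) (snd (lower t)) w"
  have "(\<Sum>t\<in>T. sc (term_coeff c \<beta>I \<beta>J t) (?m t))
      = (\<Sum>p | c p \<noteq> 0. \<Sum>k<n. sc (term_coeff c \<beta>I \<beta>J (p, k, True)) (?m (p, k, True))
          + sc (term_coeff c \<beta>I \<beta>J (p, k, False)) (?m (p, k, False)))"
    by (simp add: T_def sum.cartesian_product' UNIV_bool add.commute)
  also have "\<dots> = (\<Sum>p | c p \<noteq> 0. sc (c p) (rho_minus_psi x (mono \<rho> n (fst p) (snd p) w)))"
    unfolding rho_minus_psi_mono[OF \<beta>I \<beta>J w]
    by (intro sum.cong) (auto simp: term_coeff_def lower_def sum.distrib scale_sum_right scale_right_distrib)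
  also have "\<dots> = rho_minus_psi x v"
    unfolding v linear_sum[OF linear_rho_minus_psi[OF x]] linear_scale[OF linear_rho_minus_psi[OF x]] ..
  finally show "rho_minus_psi x v = (\<Sum>t\<in>T. sc (term_coeff c \<beta>I \<beta>J t) (?m t))" ..
qed

lemma has_deg_rho_minus_psi:
  fixes v :: 'v
  assumes x: "in_G m 0 x" "bracket_scalar x I \<beta>I" "bracket_scalar x J \<beta>J" "rho_minus_psi x w = 0"
    and B: "finite B" "\<forall>t\<in>B. lower t = q" "sum (term_coeff (coeffs n sc \<rho> w v) \<beta>I \<beta>J) B \<noteq> 0"
    and dominated: "\<And>a b k is_I. coeffs n sc \<rho> w v (a, b) \<noteq> 0 \<Longrightarrow> 0 < (if is_I then b k else a k)
      \<Longrightarrow> (if is_I then \<beta>I k else \<beta>J k) \<noteq> 0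
      \<Longrightarrow> ((a, b), k, is_I) \<in> B \<or> pair_gt n q (lower ((a, b), k, is_I))"
  shows "has_deg n sc \<rho> w (rho_minus_psi x v) q"
proof (rule has_deg_if_coeffs_grouped[OF coeffs_rho_minus_psi[OF x] _ _ B])
  let ?c = "coeffs n sc \<rho> w v"
  let ?T = "{p. ?c p \<noteq> 0} \<times> {..<n} \<times> (UNIV :: bool set)"
  show "finite ?T"
    using repr_coeffs[of v] by (simp add: repr_def)
  show "{t. term_coeff ?c \<beta>I \<beta>J t \<noteq> 0} \<subseteq> ?T"
  proof
    fix t
    assume "t \<in> {t. term_coeff ?c \<beta>I \<beta>J t \<noteq> 0}"
    moreover obtain a b k is_I where t: "t = ((a, b), k, is_I)"
      by (metis prod.collapse)
    ultimately have nz: "?c (a, b) \<noteq> 0" "0 < (if is_I then b k else a k)"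
      using term_coeff_nonzeroD by auto
    then have "a \<in> idx n" "b \<in> idx n"
      using coeffs_nonzero_idx by auto
    then have "k < n"
      using nz(2) idx_nonzero_less by (cases is_I) auto
    then show "t \<in> ?T"
      using nz(1) by (simp add: t)
  qed
  show "\<forall>t. term_coeff ?c \<beta>I \<beta>J t \<noteq> 0 \<longrightarrow> t \<in> B \<or> pair_gt n q (lower t)"
  proof (intro allI impI)
    fix t
    assume "term_coeff ?c \<beta>I \<beta>J t \<noteq> 0"
    moreover obtain a b k is_I where t: "t = ((a, b), k, is_I)"
      by (metis prod.collapse)
    ultimately show "t \<in> B \<or> pair_gt n q (lower t)"
      using term_coeff_nonzeroD dominated by simp
  qed
qed

lemma has_deg_rho_minus_psi_lower_J:
  fixes v :: 'v
  assumes x: "in_G m 0 x" "bracket_scalar x I \<beta>I" "bracket_scalar x J \<beta>J" "rho_minus_psi x w = 0"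
    and bound: "\<And>k. \<beta>I k \<noteq> 0 \<or> \<beta>J k \<noteq> 0 \<Longrightarrow> k \<le> r"
    and deg: "has_deg n sc \<rho> w v (j, i)" and r: "r < n" "0 < j r" and \<beta>J_r: "\<beta>J r \<noteq> 0"
  shows "has_deg n sc \<rho> w (rho_minus_psi x v) (j - eps r, i)"
proof (rule has_deg_rho_minus_psi[OF x, where B = "{((j, i), r, False)}"])
  show "sum (term_coeff (coeffs n sc \<rho> w v) \<beta>I \<beta>J) {((j, i), r, False)} \<noteq> 0"
    using deg r \<beta>J_r by (simp add: has_deg_def term_coeff_def)
  fix a b k is_I
  assume "coeffs n sc \<rho> w v (a, b) \<noteq> 0" and pos: "0 < (if is_I then b k else a k)"
    and "(if is_I then \<beta>I k else \<beta>J k) \<noteq> 0"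
  then have "(a, b) = (j, i) \<or> pair_gt n (j, i) (a, b)" and "k \<le> r"
    using deg bound by (auto simp: has_deg_def split: if_splits)
  then show "((a, b), k, is_I) \<in> {((j, i), r, False)} \<or> pair_gt n (j - eps r, i) (lower ((a, b), k, is_I))"
    using pair_gt_lower_J[of r n j a b i k is_I] r pos by auto
qed (simp_all add: lower_def)

lemma has_deg_rho_minus_psi_lower_I:
  fixes v :: 'v
  assumes x: "in_G m 0 x" "bracket_scalar x I \<beta>I" "bracket_scalar x J \<beta>J" "rho_minus_psi x w = 0"
    and bound: "\<And>k. \<beta>I k \<noteq> 0 \<or> \<beta>J k \<noteq> 0 \<Longrightarrow> k \<le> s"
    and deg: "has_deg n sc \<rho> w v ((\<lambda>_. 0), i)" and s: "s < n" "0 < i s" "\<forall>k>s. i k = 0"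
    and top_terms: "coeffs n sc \<rho> w v ((\<lambda>_. 0), i) * (of_nat (i s) * \<beta>I s)
      + coeffs n sc \<rho> w v (eps s, i - eps s) * \<beta>J s \<noteq> 0"
  shows "has_deg n sc \<rho> w (rho_minus_psi x v) ((\<lambda>_. 0), i - eps s)"
proof (rule has_deg_rho_minus_psi[OF x, where B = "{(((\<lambda>_. 0), i), s, True), ((eps s, i - eps s), s, False)}"])
  show "sum (term_coeff (coeffs n sc \<rho> w v) \<beta>I \<beta>J)
      {(((\<lambda>_. 0), i), s, True), ((eps s, i - eps s), s, False)} \<noteq> 0"
    using top_terms by (simp add: term_coeff_def eps_def[of s])
  show "\<forall>t\<in>{(((\<lambda>_. 0), i), s, True), ((eps s, i - eps s), s, False)}. lower t = ((\<lambda>_. 0), i - eps s)"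
    by (simp add: lower_def fun_eq_iff)
  fix a b k is_I
  assume "coeffs n sc \<rho> w v (a, b) \<noteq> 0" and pos: "0 < (if is_I then b k else a k)"
    and "(if is_I then \<beta>I k else \<beta>J k) \<noteq> 0"
  then have "(a, b) = ((\<lambda>_. 0), i) \<or> pair_gt n ((\<lambda>_. 0), i) (a, b)" "a \<in> idx n" "b \<in> idx n" "k \<le> s"
    using deg bound coeffs_nonzero_idx by (auto simp: has_deg_def split: if_splits)
  then show "((a, b), k, is_I) \<in> {(((\<lambda>_. 0), i), s, True), ((eps s, i - eps s), s, False)}
      \<or> pair_gt n ((\<lambda>_. 0), i - eps s) (lower ((a, b), k, is_I))"
    using pair_gt_lower_I[of s n i a b k is_I] s pos by auto
qed simp

lemma psi_IJ_eq_0: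
  assumes "X \<in> {I, J}" "int (m + n) \<le> k"
  shows "\<psi> (X k) = 0"
  using whittaker[unfolded whittaker_def, rule_format, of "H (int m)" "X (k - int m)"] assms by auto

lemma psi_IJ_nonzero_index:
  assumes "X \<in> {I, J}" "t < n" "\<psi> (X (int (m + n - 1 - t) + int k)) \<noteq> 0"
  shows "k \<le> t"
  using psi_IJ_eq_0[OF assms(1), of "int (m + n - 1 - t) + int k"] assms(2,3) by (cases "k \<le> t") auto

lemma rho_minus_psi_w: "in_G m n x \<Longrightarrow> rho_minus_psi x w = 0"
  by (simp add: rho_minus_psi_def whittaker_vector)

lemma bracket_scalar_if_brk:
  assumes X: "X \<in> {I, J}" and x: "in_G m 0 x" and a: "int m \<le> a"
    and brk: "\<And>k. brk x (X (int k)) = [(\<gamma> k, X (a + int k))]"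
  shows "bracket_scalar x X (\<lambda>k. \<gamma> k * \<psi> (X (a + int k)))"
  unfolding bracket_scalar_def
proof (intro ballI allI)
  fix u k
  assume u: "u \<in> IJ_whittaker"
  have "\<rho> x (\<rho> (X (int k)) u) - \<rho> (X (int k)) (\<rho> x u) = sc (\<gamma> k) (\<rho> (X (a + int k)) u)"
    using rho_bracket[of x "X (int k)" u] X x brk by auto
  also have "\<rho> (X (a + int k)) u = sc (\<psi> (X (a + int k))) u"
    using u X a n_le_m by (auto simp: IJ_whittaker_def)
  finally show "\<rho> x (\<rho> (X (int k)) u) - \<rho> (X (int k)) (\<rho> x u) = sc (\<gamma> k * \<psi> (X (a + int k))) u"
    by (simp add: scale_scale)
qed

lemma bracket_scalar_H:
  assumes "int m \<le> a"
  shows "bracket_scalar (H a) I (\<lambda>k. \<psi> (I (a + int k)))"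
    and "bracket_scalar (H a) J (\<lambda>k. - \<psi> (J (a + int k)))"
  using bracket_scalar_if_brk[of I "H a" a "\<lambda>_. 1"] bracket_scalar_if_brk[of J "H a" a "\<lambda>_. -1"] assms
  by simp_all

lemma bracket_scalar_L:
  assumes "int m \<le> a"
  shows "bracket_scalar (L a) I (\<lambda>k. of_int (int k - a) * \<psi> (I (a + int k)))"
    and "bracket_scalar (L a) J (\<lambda>k. of_int (int k - a) * \<psi> (J (a + int k)))"
  using bracket_scalar_if_brk[of I "L a" a "\<lambda>k. of_int (int k - a)"]
    bracket_scalar_if_brk[of J "L a" a "\<lambda>k. of_int (int k - a)"] assms
  by simp_all

lemma has_deg_H_lower_J:
  fixes v :: 'v
  assumes \<psi>J: "\<psi> (J (int (m + n - 1))) \<noteq> 0" and deg: "has_deg n sc \<rho> w v (j, i)" and j: "j \<noteq> (\<lambda>_. 0)"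
  defines "r \<equiv> LEAST k. j k \<noteq> 0"
  shows "has_deg n sc \<rho> w (rho_minus_psi (H (int (m + n - 1 - r))) v) (j - eps r, i)"
proof -
  have "j \<in> idx n"
    using deg coeffs_nonzero_idx by (auto simp: has_deg_def)
  then have r: "r < n" "0 < j r"
    using Least_nonzero_idx j unfolding r_def by auto
  define a where "a = int (m + n - 1 - r)"
  have a: "int m \<le> a" "a + int r = int (m + n - 1)"
    using r by (auto simp: a_def)
  note bound = psi_IJ_nonzero_index[OF _ r(1), folded a_def]
  show ?thesis
    unfolding a_def[symmetric]
    by (rule has_deg_rho_minus_psi_lower_J[OF _ bracket_scalar_H[OF a(1)] _ _ deg r])
      (use a \<psi>J bound in \<open>auto intro: rho_minus_psi_w\<close>)
qed

lemma has_deg_H_or_L_lower_I: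
  fixes v :: 'v
  assumes \<psi>I: "\<psi> (I (int (m + n - 1))) \<noteq> 0" and deg: "has_deg n sc \<rho> w v ((\<lambda>_. 0), i)"
    and i: "i \<noteq> (\<lambda>_. 0)"
  defines "s \<equiv> GREATEST k. i k \<noteq> 0"
  shows "has_deg n sc \<rho> w (rho_minus_psi (H (int (m + n - 1 - s))) v) ((\<lambda>_. 0), i - eps s)
    \<or> has_deg n sc \<rho> w (rho_minus_psi (L (int (m + n - 1 - s))) v) ((\<lambda>_. 0), i - eps s)"
proof -
  let ?c = "coeffs n sc \<rho> w v"
  have "i \<in> idx n"
    using deg coeffs_nonzero_idx by (auto simp: has_deg_def)
  then have s: "s < n" "0 < i s" "\<forall>k>s. i k = 0"
    using Greatest_nonzero_idx i unfolding s_def by auto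
  define a where "a = int (m + n - 1 - s)"
  have a: "int m \<le> a" "a + int s = int (m + n - 1)"
    using s by (auto simp: a_def)
  note bound = psi_IJ_nonzero_index[OF _ s(1), folded a_def]
  \<comment> \<open>Up to the factor \<open>s - a\<close> for \<open>L a\<close>, \<open>Y\<close> and \<open>Z\<close> are the coefficients of the two top terms.\<close>
  define Y where "Y = ?c ((\<lambda>_. 0), i) * (of_nat (i s) * \<psi> (I (int (m + n - 1))))"
  define Z where "Z = ?c (eps s, i - eps s) * \<psi> (J (int (m + n - 1)))"
  have "Y \<noteq> 0"
    using deg s(2) \<psi>I by (simp add: Y_def has_deg_def)
  moreover have "(Y - Z) + (Y + Z) = 2 * Y"
    by simp
  ultimately have "Y - Z \<noteq> 0 \<or> Y + Z \<noteq> 0"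
    by auto
  then show ?thesis
  proof
    assume "Y - Z \<noteq> 0"
    moreover have "?c ((\<lambda>_. 0), i) * (of_nat (i s) * \<psi> (I (a + int s)))
        + ?c (eps s, i - eps s) * - \<psi> (J (a + int s)) = Y - Z"
      by (simp add: Y_def Z_def a(2))
    ultimately have "has_deg n sc \<rho> w (rho_minus_psi (H a) v) ((\<lambda>_. 0), i - eps s)"
      using a bound
      by (intro has_deg_rho_minus_psi_lower_I[OF _ bracket_scalar_H[OF a(1)] _ _ deg s]) (auto intro: rho_minus_psi_w)
    then show ?thesis
      by (simp add: a_def)
  next
    assume "Y + Z \<noteq> 0"
    moreover have "of_int (int s - a) \<noteq> (0 :: complex)"
      unfolding of_int_eq_0_iff using s(1) n_le_m by (simp add: a_def)
    moreover have "?c ((\<lambda>_. 0), i) * (of_nat (i s) * (of_int (int s - a) * \<psi> (I (a + int s))))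
        + ?c (eps s, i - eps s) * (of_int (int s - a) * \<psi> (J (a + int s))) = of_int (int s - a) * (Y + Z)"
      by (simp add: Y_def Z_def a(2) algebra_simps)
    ultimately have "has_deg n sc \<rho> w (rho_minus_psi (L a) v) ((\<lambda>_. 0), i - eps s)"
      using a bound
      by (intro has_deg_rho_minus_psi_lower_I[OF _ bracket_scalar_L[OF a(1)] _ _ deg s]) (auto intro: rho_minus_psi_w)
    then show ?thesis
      by (simp add: a_def)
  qed
qed

end

theorem lemma3p2:
  fixes m n :: nat and \<psi> :: "gb \<Rightarrow> complex"
    and sc :: "complex \<Rightarrow> 'v::ab_group_add \<Rightarrow> 'v" and \<rho> :: "gb \<Rightarrow> 'v \<Rightarrow> 'v"
    and w v :: 'v and j i :: "nat \<Rightarrow> nat"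
  assumes "0 < n" and "n \<le> m"
    and "whittaker m n \<psi>"
    and "\<psi> (I (int (m + n - 1))) * \<psi> (J (int (m + n - 1))) \<noteq> 0"
    and "lie_module m sc \<rho>"
    and "\<forall>a. in_G m n a \<longrightarrow> \<rho> a w = sc (\<psi> a) w"
    and "\<forall>u. \<exists>!c. repr n sc \<rho> w u c"
    and "\<forall>a. v \<noteq> sc a w"
    and "has_deg n sc \<rho> w v (j, i)"
  shows "(j \<noteq> (\<lambda>_. 0) \<longrightarrow>
           (let r = (LEAST k. j k \<noteq> 0) in
              has_deg n sc \<rho> w
                (\<rho> (H (int (m + n - 1 - r))) v - sc (\<psi> (H (int (m + n - 1 - r)))) v)
                (j - eps r, i)))
       \<and> (j = (\<lambda>_. 0) \<and> i \<noteq> (\<lambda>_. 0) \<longrightarrow>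
           (let s = (GREATEST k. i k \<noteq> 0) in
              has_deg n sc \<rho> w
                (\<rho> (H (int (m + n - 1 - s))) v - sc (\<psi> (H (int (m + n - 1 - s)))) v)
                ((\<lambda>_. 0), i - eps s)
            \<or> has_deg n sc \<rho> w
                (\<rho> (L (int (m + n - 1 - s))) v - sc (\<psi> (L (int (m + n - 1 - s)))) v)
                ((\<lambda>_. 0), i - eps s)))"
proof -
  have "vector_space sc"
    using assms(5) by (simp add: lie_module_def)
  then interpret whittaker_module sc n \<rho> w m \<psi>
    using assms by (intro whittaker_module.intro monomial_basis.intro)
      (simp_all add: whittaker_module_axioms_def monomial_basis_axioms_def)
  have \<psi>I: "\<psi> (I (int (m + n - 1))) \<noteq> 0" and \<psi>J: "\<psi> (J (int (m + n - 1))) \<noteq> 0"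
    using assms(4) by auto
  show ?thesis
    unfolding Let_def rho_minus_psi_def[symmetric]
    using has_deg_H_lower_J[OF \<psi>J assms(9)] has_deg_H_or_L_lower_I[OF \<psi>I] assms(9) by auto
qed

end
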